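(* Let $L\ge 2$ be an integer, let $A>0$, $\alpha>0$, $\beta>0$, $\sigma_v^2>0$ be known constants, let $\varphi\in[0,2\pi)$ be an unknown parameter, and let $\psi_l=2\pi l/L$ for $l=0,\dots,L-1$. Suppose we observe $$P[l]=A\left|\alpha+\beta e^{\mathrm{j}(\psi_l+\varphi)}+v_l\right|^2,\qquad l=0,\dots,L-1,$$ where $v_0,\dots,v_{L-1}$ are i.i.d. $\mathcal{CN}(0,\sigma_v^2)$. Define $K=2\alpha\beta/(\alpha^2+\beta^2)$, $\gamma_l=\left(\alpha^2+\beta^2+2\alpha\beta\cos(\psi_l+\varphi)\right)/\sigma_v^2$, and let $\bar\gamma=\frac1L\sum_{l=0}^{L-1}\gamma_l$. Then the Cramér–Rao lower bound $\mathrm{CRLB}(\varphi)$ for estimating $\varphi$ from $P[0],\dots,P[L-1]$ (i.e. the reciprocal of the Fisher information $-\mathbb{E}\left[\partial^2\log p(P[0],\dots,P[L-1]\mid\varphi)/\partial\varphi^2\right]$) satisfies $$\frac{1}{\mathrm{CRLB}(\varphi)}=K^2\bar\gamma^{\,2}\sum_{l=0}^{L-1}\sin^2(\psi_l+\varphi)\left(\frac{1}{\gamma_l}-g(\gamma_l)\right),$$ where $$g(\gamma)=\int_0^{+\infty}\gamma t\,\exp(-\gamma(1+t))\,I_0\!\left(2\gamma\sqrt t\right)\left(1-R^2\!\left(2\gamma\sqrt t\right)\right)\mathrm{d}t .$$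
   Context: $\mathcal{CN}(0,\sigma^2)$ is the circularly-symmetric complex Gaussian distribution with variance $\sigma^2$. $I_\nu$ denotes the $\nu$-th order modified Bessel function of the first kind, and $R(z)=I_1(z)/I_0(z)$. Each $P[l]$ thus follows a scaled noncentral chi-squared distribution with two degrees of freedom, with density $\frac{1}{A\sigma_v^2}\exp\!\left(-\frac{x+\lambda_l}{A\sigma_v^2}\right)I_0\!\left(\frac{\sqrt{\lambda_l x}}{A\sigma_v^2/2}\right)$ for $x\ge0$, where $\lambda_l=A(\alpha^2+\beta^2+2\alpha\beta\cos(\psi_l+\varphi))$. The phases $\psi_l=2\pi l/L$ come from the model in which the observations are taken at equally spaced instants $t_l=lT_s/L$ of a phase ramp $\psi(t)=2\pi t/T_s$. *)

theory Defs
  imports "HOL-Analysis.Analysis"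
begin

definition bessel_I :: "nat \<Rightarrow> real \<Rightarrow> real" where
  "bessel_I n z = (\<Sum>k. (z / 2) ^ (2 * k + n) / (fact k * fact (k + n)))"

definition bessel_R :: "real \<Rightarrow> real" where
  "bessel_R z = bessel_I 1 z / bessel_I 0 z"

definition psi :: "nat \<Rightarrow> nat \<Rightarrow> real" where
  "psi L l = 2 * pi * real l / real L"

definition ncp :: "real \<Rightarrow> real \<Rightarrow> real \<Rightarrow> nat \<Rightarrow> real \<Rightarrow> nat \<Rightarrow> real" where
  "ncp A \<alpha> \<beta> L \<phi> l = A * (\<alpha>\<^sup>2 + \<beta>\<^sup>2 + 2 * \<alpha> * \<beta> * cos (psi L l + \<phi>))"

text \<open>Density of P[l] (scaled noncentral chi-squared, two degrees of freedom), zero for x < 0.\<close>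
definition obs_density ::
  "real \<Rightarrow> real \<Rightarrow> real \<Rightarrow> real \<Rightarrow> nat \<Rightarrow> real \<Rightarrow> nat \<Rightarrow> real \<Rightarrow> real" where
  "obs_density A \<alpha> \<beta> \<sigma>2 L \<phi> l x =
     (if 0 \<le> x then
        1 / (A * \<sigma>2) * exp (- (x + ncp A \<alpha> \<beta> L \<phi> l) / (A * \<sigma>2))
          * bessel_I 0 (sqrt (ncp A \<alpha> \<beta> L \<phi> l * x) / (A * \<sigma>2 / 2))
      else 0)"

definition joint_density ::
  "real \<Rightarrow> real \<Rightarrow> real \<Rightarrow> real \<Rightarrow> nat \<Rightarrow> real \<Rightarrow> (nat \<Rightarrow> real) \<Rightarrow> real" where
  "joint_density A \<alpha> \<beta> \<sigma>2 L \<phi> x = (\<Prod>l<L. obs_density A \<alpha> \<beta> \<sigma>2 L \<phi> l (x l))"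

definition fisher_info :: "real \<Rightarrow> real \<Rightarrow> real \<Rightarrow> real \<Rightarrow> nat \<Rightarrow> real \<Rightarrow> real" where
  "fisher_info A \<alpha> \<beta> \<sigma>2 L \<phi> =
     integral\<^sup>L (PiM {..<L} (\<lambda>_. lborel))
       (\<lambda>x. - deriv (deriv (\<lambda>\<theta>. ln (joint_density A \<alpha> \<beta> \<sigma>2 L \<theta> x))) \<phi>
             * joint_density A \<alpha> \<beta> \<sigma>2 L \<phi> x)"

definition CRLB :: "real \<Rightarrow> real \<Rightarrow> real \<Rightarrow> real \<Rightarrow> nat \<Rightarrow> real \<Rightarrow> real" where
  "CRLB A \<alpha> \<beta> \<sigma>2 L \<phi> = 1 / fisher_info A \<alpha> \<beta> \<sigma>2 L \<phi>"

definition snr :: "real \<Rightarrow> real \<Rightarrow> real \<Rightarrow> nat \<Rightarrow> real \<Rightarrow> nat \<Rightarrow> real" where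
  "snr \<alpha> \<beta> \<sigma>2 L \<phi> l = (\<alpha>\<^sup>2 + \<beta>\<^sup>2 + 2 * \<alpha> * \<beta> * cos (psi L l + \<phi>)) / \<sigma>2"

definition gfun :: "real \<Rightarrow> real" where
  "gfun \<gamma> = (LBINT t:{0<..}. \<gamma> * t * exp (- \<gamma> * (1 + t)) * bessel_I 0 (2 * \<gamma> * sqrt t)
                 * (1 - (bessel_R (2 * \<gamma> * sqrt t))\<^sup>2))"

end

theory Submission
  imports Defs "HOL-Probability.Probability"
begin

text \<open>Each \<open>P[l]\<close> has the density \<open>p(x) = exp(-(x + \<mu>)/s) I\<^sub>0(2 sqrt(\<mu> x)/s) / s\<close> with
  \<open>s = A \<sigma>\<^sub>v\<^sup>2\<close>, and \<open>\<phi>\<close> enters only through the noncentrality \<open>\<mu> = \<lambda>\<^sub>l(\<phi>)\<close>. By independence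
  the Fisher information is \<open>\<Sum>\<^sub>l \<lambda>\<^sub>l'(\<phi>)\<^sup>2 J(s, \<lambda>\<^sub>l)\<close>, where \<open>J(s, \<mu>)\<close> is the Fisher information of
  one observation about \<open>\<mu>\<close>. Writing \<open>I\<^sub>m(z)\<close> as \<open>(z/2)\<^sup>m\<close> times a power series in
  \<open>(z/2)\<^sup>2 = \<mu> x / s\<^sup>2\<close>, every moment that occurs is an exponential series in closed form. This
  gives \<open>E[score] = 0\<close> and \<open>J(s, \<mu>) = E[\<rho>\<^sup>2] - 1/s\<^sup>2\<close> with \<open>\<rho> = \<partial>\<^sub>\<mu> log I\<^sub>0(2 sqrt(\<mu> x)/s)\<close>, and
  the substitution \<open>x = \<mu> t\<close> turns \<open>E[\<rho>\<^sup>2]\<close> into \<open>g(\<mu>/s)\<close>. Finally \<open>\<Sum>\<^sub>l cos(\<psi>\<^sub>l + \<phi>) = 0\<close>,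
  so \<open>\<gamma>bar = (\<alpha>\<^sup>2 + \<beta>\<^sup>2)/\<sigma>\<^sub>v\<^sup>2\<close> and \<open>K \<gamma>bar = 2\<alpha>\<beta>/\<sigma>\<^sub>v\<^sup>2\<close>.\<close>

definition bessel_coeff :: "nat \<Rightarrow> nat \<Rightarrow> real" where
  "bessel_coeff m k = 1 / (fact k * fact (k + m))"

text \<open>The entire function with \<open>I\<^sub>m(z) = (z/2)\<^sup>m * bessel_red m ((z/2)\<^sup>2)\<close>; working in
  \<open>y = (z/2)\<^sup>2\<close> removes all square roots from the densities below.\<close>
definition bessel_red :: "nat \<Rightarrow> real \<Rightarrow> real" where
  "bessel_red m y = (\<Sum>k. bessel_coeff m k * y ^ k)"

lemma bessel_coeff_pos: "0 < bessel_coeff m k"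
  by (simp add: bessel_coeff_def)

lemma summable_bessel_red: "summable (\<lambda>k. bessel_coeff m k * y ^ k)"
proof (rule summable_comparison_test[OF _ summable_exp[of "\<bar>y\<bar>"]])
  have "bessel_coeff m k \<le> inverse (fact k)" for k
    unfolding bessel_coeff_def by (simp add: divide_simps)
  then show "\<exists>N. \<forall>k\<ge>N. norm (bessel_coeff m k * y ^ k) \<le> inverse (fact k) * \<bar>y\<bar> ^ k"
    using bessel_coeff_pos
    by (intro exI[of _ 0] allI impI) (simp add: abs_mult power_abs less_imp_le mult_right_mono)
qed

lemma sums_bessel_red: "(\<lambda>k. bessel_coeff m k * y ^ k) sums bessel_red m y"
  unfolding bessel_red_def using summable_bessel_red by (rule summable_sums)

lemma diffs_bessel_coeff: "diffs (bessel_coeff m) = bessel_coeff (Suc m)"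
proof
  fix k
  show "diffs (bessel_coeff m) k = bessel_coeff (Suc m) k"
    unfolding diffs_def bessel_coeff_def
    by (simp add: field_simps del: fact_Suc) (simp add: algebra_simps)
qed

lemma has_field_derivative_bessel_red:
  "(bessel_red m has_field_derivative bessel_red (Suc m) y) (at y)"
proof -
  have "((\<lambda>z. \<Sum>k. bessel_coeff m k * z ^ k) has_field_derivative
          (\<Sum>k. diffs (bessel_coeff m) k * y ^ k)) (at y)"
    by (rule termdiffs_strong'[where K = "\<bar>y\<bar> + 1"]) (auto simp: summable_bessel_red)
  then show ?thesis by (simp add: diffs_bessel_coeff bessel_red_def[abs_def])
qed

lemma has_field_derivative_bessel_red_comp [derivative_intros]:
  "(f has_field_derivative f') (at x within S) \<Longrightarrow>
   ((\<lambda>x. bessel_red m (f x)) has_field_derivative bessel_red (Suc m) (f x) * f') (at x within S)"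
  using DERIV_chain2[OF has_field_derivative_bessel_red] by blast

lemma continuous_on_bessel_red: "continuous_on S (bessel_red m)"
  using has_field_derivative_bessel_red
  by (intro continuous_at_imp_continuous_on) (blast intro: DERIV_isCont)

lemma borel_measurable_bessel_red [measurable]: "bessel_red m \<in> borel_measurable borel"
  by (intro borel_measurable_continuous_onI continuous_on_bessel_red)

lemma bessel_red_pos:
  assumes "0 \<le> y"
  shows "0 < bessel_red m y"
proof -
  have "(\<Sum>k\<in>{0}. bessel_coeff m k * y ^ k) \<le> bessel_red m y"
    unfolding bessel_red_def using assms
    by (intro sum_le_suminf summable_bessel_red) (auto intro!: mult_nonneg_nonneg less_imp_le[OF bessel_coeff_pos])
  then show ?thesis using bessel_coeff_pos[of m 0] by simp
qed

lemma bessel_red_Suc_le: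
  assumes "0 \<le> y"
  shows "bessel_red (Suc m) y \<le> bessel_red m y"
proof -
  have "bessel_coeff (Suc m) k \<le> bessel_coeff m k" for k
    unfolding bessel_coeff_def by (auto simp: divide_simps intro!: mult_left_mono)
  then show ?thesis
    unfolding bessel_red_def using assms
    by (intro suminf_le summable_bessel_red) (auto intro: mult_right_mono)
qed

lemma bessel_red_0_eq: "bessel_red 0 y = bessel_red 1 y + y * bessel_red 2 y"
proof -
  have "(\<lambda>k. bessel_coeff 1 k * y ^ k + (if k = 0 then 0 else y * (bessel_coeff 2 (k - 1) * y ^ (k - 1))))
          sums (bessel_red 1 y + y * bessel_red 2 y)"
  proof (intro sums_add)
    show "(\<lambda>k. if k = 0 then 0 else y * (bessel_coeff 2 (k - 1) * y ^ (k - 1))) sums (y * bessel_red 2 y)"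
      using sums_mult[OF sums_bessel_red[of 2 y], of y]
        sums_Suc_iff[where f = "\<lambda>k. if k = 0 then 0 else y * (bessel_coeff 2 (k - 1) * y ^ (k - 1))"]
      by simp
  qed (rule sums_bessel_red)
  moreover have "bessel_coeff 1 k * y ^ k + (if k = 0 then 0 else y * (bessel_coeff 2 (k - 1) * y ^ (k - 1)))
      = bessel_coeff 0 k * y ^ k" for k
  proof (cases k)
    case (Suc i)
    have coeff: "bessel_coeff 0 (Suc i) = bessel_coeff 1 (Suc i) + bessel_coeff 2 i"
      unfolding bessel_coeff_def by (simp add: field_simps del: fact_Suc) (simp add: algebra_simps)
    show ?thesis unfolding Suc coeff by (simp add: algebra_simps)
  qed (simp add: bessel_coeff_def)
  ultimately show ?thesis using sums_bessel_red[of 0 y] sums_unique2 by simp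
qed

lemma bessel_I_eq_bessel_red: "bessel_I m z = (z / 2) ^ m * bessel_red m ((z / 2)\<^sup>2)"
proof -
  have "(\<lambda>k. (z / 2) ^ m * (bessel_coeff m k * ((z / 2)\<^sup>2) ^ k)) sums ((z / 2) ^ m * bessel_red m ((z / 2)\<^sup>2))"
    by (intro sums_mult sums_bessel_red)
  moreover have "(z / 2) ^ m * (bessel_coeff m k * ((z / 2)\<^sup>2) ^ k) = (z / 2) ^ (2 * k + m) / (fact k * fact (k + m))" for k
    by (simp add: bessel_coeff_def power_add power_mult)
  ultimately show ?thesis unfolding bessel_I_def by (simp add: sums_iff)
qed


lemma nn_integral_power_exp:
  assumes "0 < s"
  shows "(\<integral>\<^sup>+x. ennreal (if 0 \<le> x then x ^ j * exp (- x / s) else 0) \<partial>lborel) = ennreal (fact j * s ^ (j + 1))"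
proof -
  have "(\<integral>\<^sup>+x. ennreal (if 0 \<le> x then x ^ j * exp (- x / s) else 0) \<partial>lborel)
      = (\<integral>\<^sup>+x. ennreal s * ennreal (erlang_density 0 (1 / s) x * x ^ j) \<partial>lborel)"
    using assms by (intro nn_integral_cong) (auto simp: erlang_density_def ennreal_mult'[symmetric])
  also have "\<dots> = ennreal s * (\<integral>\<^sup>+x. ennreal (erlang_density 0 (1 / s) x * x ^ j) \<partial>lborel)"
    by (rule nn_integral_cmult) simp
  also have "\<dots> = ennreal s * ennreal (fact j / (1 / s) ^ j)"
    using assms nn_integral_erlang_ith_moment[of "1 / s" 0 j] by simp
  also have "\<dots> = ennreal (fact j * s ^ (j + 1))"
    using assms by (simp add: ennreal_mult'[symmetric] power_divide field_simps)
  finally show ?thesis .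
qed

lemma fact_add_le: "(fact (n + k) :: real) \<le> fact n * fact k * 2 ^ (n + k)"
proof -
  have "fact k * fact n * ((n + k) choose k) = (fact (n + k) :: nat)"
    using binomial_fact_lemma[of k "n + k"] by simp
  then have "(fact (n + k) :: nat) \<le> fact n * fact k * 2 ^ (n + k)"
    using binomial_le_pow2[of "n + k" k] by (metis mult.commute mult_le_mono2)
  then have "real (fact (n + k)) \<le> real (fact n * fact k * 2 ^ (n + k))"
    by (simp only: of_nat_le_iff)
  then show ?thesis by simp
qed

lemma summable_laplace_bessel_red:
  assumes c: "0 \<le> c" and s: "0 < s"
  shows "summable (\<lambda>k. bessel_coeff m k * c ^ k * (fact (n + k) * s ^ (n + k + 1)))"
proof (rule summable_comparison_test)
  show "summable (\<lambda>k. fact n * 2 ^ n * s ^ (n + 1) * ((2 * c * s) ^ k / fact k))"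
    using summable_exp[of "2 * c * s"] by (intro summable_mult) (simp add: divide_inverse mult.commute)
  show "\<exists>N. \<forall>k\<ge>N. norm (bessel_coeff m k * c ^ k * (fact (n + k) * s ^ (n + k + 1)))
      \<le> fact n * 2 ^ n * s ^ (n + 1) * ((2 * c * s) ^ k / fact k)"
  proof (intro exI[of _ 0] allI impI)
    fix k
    have "bessel_coeff m k \<le> 1 / (fact k * fact k)"
      unfolding bessel_coeff_def by (auto simp: divide_simps intro!: mult_left_mono fact_mono)
    then have "bessel_coeff m k * c ^ k * (fact (n + k) * s ^ (n + k + 1))
        \<le> 1 / (fact k * fact k) * c ^ k * ((fact n * fact k * 2 ^ (n + k)) * s ^ (n + k + 1))"
      using c s fact_add_le[of n k] bessel_coeff_pos[of m k]
      by (intro mult_mono mult_right_mono) auto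
    also have "\<dots> = fact n * 2 ^ n * s ^ (n + 1) * ((2 * c * s) ^ k / fact k)"
      by (simp add: power_add power_mult_distrib field_simps)
    finally show "norm (bessel_coeff m k * c ^ k * (fact (n + k) * s ^ (n + k + 1)))
        \<le> fact n * 2 ^ n * s ^ (n + 1) * ((2 * c * s) ^ k / fact k)"
      using c s bessel_coeff_pos[of m k] by simp
  qed
qed

lemma has_bochner_integral_laplace_bessel_red:
  assumes c: "0 \<le> c" and s: "0 < s"
  shows "has_bochner_integral lborel (\<lambda>x. if 0 \<le> x then x ^ n * exp (- x / s) * bessel_red m (c * x) else 0)
           (\<Sum>k. bessel_coeff m k * c ^ k * (fact (n + k) * s ^ (n + k + 1)))"
proof (rule has_bochner_integral_nn_integral)
  define t where "t k x = bessel_coeff m k * c ^ k * (if 0 \<le> x then x ^ (n + k) * exp (- x / s) else 0)" for k x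
  have t_nonneg: "0 \<le> t k x" for k x
    unfolding t_def using c bessel_coeff_pos[of m k] by simp
  have t_sums: "(\<lambda>k. t k x) sums (if 0 \<le> x then x ^ n * exp (- x / s) * bessel_red m (c * x) else 0)" for x
  proof (cases "0 \<le> x")
    case True
    have "(\<lambda>k. x ^ n * exp (- x / s) * (bessel_coeff m k * (c * x) ^ k)) sums (x ^ n * exp (- x / s) * bessel_red m (c * x))"
      by (intro sums_mult sums_bessel_red)
    then show ?thesis using True by (simp add: t_def power_add power_mult_distrib mult_ac)
  qed (simp add: t_def)
  have "(\<integral>\<^sup>+x. ennreal (if 0 \<le> x then x ^ n * exp (- x / s) * bessel_red m (c * x) else 0) \<partial>lborel)
      = (\<integral>\<^sup>+x. (\<Sum>k. ennreal (t k x)) \<partial>lborel)"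
    using t_sums t_nonneg by (intro nn_integral_cong) (simp add: suminf_ennreal2 sums_iff)
  also have "\<dots> = (\<Sum>k. \<integral>\<^sup>+x. ennreal (t k x) \<partial>lborel)"
    by (rule nn_integral_suminf) (simp add: t_def)
  also have "\<dots> = (\<Sum>k. ennreal (bessel_coeff m k * c ^ k * (fact (n + k) * s ^ (n + k + 1))))"
  proof (rule suminf_cong)
    fix k
    have "(\<integral>\<^sup>+x. ennreal (t k x) \<partial>lborel) = ennreal (bessel_coeff m k * c ^ k)
        * (\<integral>\<^sup>+x. ennreal (if 0 \<le> x then x ^ (n + k) * exp (- x / s) else 0) \<partial>lborel)"
      unfolding t_def using c bessel_coeff_pos[of m k]
      by (subst nn_integral_cmult[symmetric]) (auto intro!: nn_integral_cong simp: ennreal_mult'[symmetric])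
    then show "(\<integral>\<^sup>+x. ennreal (t k x) \<partial>lborel) = ennreal (bessel_coeff m k * c ^ k * (fact (n + k) * s ^ (n + k + 1)))"
      using c s bessel_coeff_pos[of m k] by (simp add: nn_integral_power_exp ennreal_mult'[symmetric])
  qed
  also have "\<dots> = ennreal (\<Sum>k. bessel_coeff m k * c ^ k * (fact (n + k) * s ^ (n + k + 1)))"
    using c s
    by (intro suminf_ennreal2 summable_laplace_bessel_red) (auto simp: less_imp_le[OF bessel_coeff_pos])
  finally show "(\<integral>\<^sup>+x. ennreal (if 0 \<le> x then x ^ n * exp (- x / s) * bessel_red m (c * x) else 0) \<partial>lborel)
      = ennreal (\<Sum>k. bessel_coeff m k * c ^ k * (fact (n + k) * s ^ (n + k + 1)))" .
  show "0 \<le> (\<Sum>k. bessel_coeff m k * c ^ k * (fact (n + k) * s ^ (n + k + 1)))"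
    using c s
    by (intro suminf_nonneg summable_laplace_bessel_red) (auto simp: less_imp_le[OF bessel_coeff_pos])
  show "AE x in lborel. 0 \<le> (if 0 \<le> x then x ^ n * exp (- x / s) * bessel_red m (c * x) else 0)"
    using c by (auto intro!: mult_nonneg_nonneg less_imp_le[OF bessel_red_pos])
qed measurable

lemma integrable_laplace_bessel_red:
  "0 \<le> c \<Longrightarrow> 0 < s \<Longrightarrow>
    integrable lborel (\<lambda>x. if 0 \<le> x then x ^ n * exp (- x / s) * bessel_red m (c * x) else 0)"
  using has_bochner_integral_laplace_bessel_red by (rule integrable.intros)

lemma has_bochner_integral_laplace_bessel_red_exp:
  assumes "0 \<le> c" and "0 < s"
  shows "has_bochner_integral lborel (\<lambda>x. if 0 \<le> x then x ^ n * exp (- x / s) * bessel_red n (c * x) else 0)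
           (s ^ (n + 1) * exp (c * s))"
proof -
  have terms: "bessel_coeff n k * c ^ k * (fact (n + k) * s ^ (n + k + 1)) = s ^ (n + 1) * ((c * s) ^ k / fact k)" for k
    by (simp add: bessel_coeff_def power_add power_mult_distrib add.commute)
  have "(\<Sum>k. bessel_coeff n k * c ^ k * (fact (n + k) * s ^ (n + k + 1))) = s ^ (n + 1) * exp (c * s)"
    unfolding terms using exp_converges[of "c * s"] by (simp add: sums_iff suminf_mult divide_inverse mult.commute)
  then show ?thesis using has_bochner_integral_laplace_bessel_red[OF assms, of n n] by simp
qed

text \<open>\<open>ncx2_kernel 0 s \<mu>\<close> is the density of \<open>s/2\<close> times a noncentral \<open>\<chi>\<^sup>2\<close> variable with two degrees
  of freedom and noncentrality \<open>2\<mu>/s\<close>; the factor \<open>(x/s\<^sup>2)\<^sup>n bessel_red n (\<mu>x/s\<^sup>2)\<close> is the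
  \<open>n\<close>-th \<open>\<mu>\<close>-derivative of \<open>bessel_red 0 (\<mu>x/s\<^sup>2)\<close>.\<close>
definition ncx2_kernel :: "nat \<Rightarrow> real \<Rightarrow> real \<Rightarrow> real \<Rightarrow> real" where
  "ncx2_kernel n s \<mu> x =
     (if 0 \<le> x then (x / s\<^sup>2) ^ n * (exp (- (x + \<mu>) / s) / s * bessel_red n (\<mu> / s\<^sup>2 * x)) else 0)"

abbreviation ncx2_density :: "real \<Rightarrow> real \<Rightarrow> real \<Rightarrow> real" where
  "ncx2_density \<equiv> ncx2_kernel 0"

lemma ncx2_density_pos: "0 < s \<Longrightarrow> 0 \<le> \<mu> \<Longrightarrow> 0 \<le> x \<Longrightarrow> 0 < ncx2_density s \<mu> x"
  by (simp add: ncx2_kernel_def bessel_red_pos)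

lemma has_bochner_integral_ncx2_kernel:
  assumes s: "0 < s" and "0 \<le> \<mu>"
  shows "has_bochner_integral lborel (ncx2_kernel n s \<mu>) (1 / s ^ n)"
proof -
  have "exp (- (x + \<mu>) / s) = exp (- \<mu> / s) * exp (- x / s)" for x
    by (simp add: exp_add[symmetric] diff_divide_distrib)
  then have "ncx2_kernel n s \<mu> = (\<lambda>x. exp (- \<mu> / s) / s ^ (2 * n + 1) *
      (if 0 \<le> x then x ^ n * exp (- x / s) * bessel_red n (\<mu> / s\<^sup>2 * x) else 0))"
    by (auto simp: fun_eq_iff ncx2_kernel_def power_divide power_mult[symmetric] mult.commute[of 2] mult_ac)
  moreover have "has_bochner_integral lborel (\<lambda>x. exp (- \<mu> / s) / s ^ (2 * n + 1) *
      (if 0 \<le> x then x ^ n * exp (- x / s) * bessel_red n (\<mu> / s\<^sup>2 * x) else 0))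
      (exp (- \<mu> / s) / s ^ (2 * n + 1) * (s ^ (n + 1) * exp (\<mu> / s\<^sup>2 * s)))"
    using assms by (intro has_bochner_integral_mult_right has_bochner_integral_laplace_bessel_red_exp) auto
  moreover have "exp (- \<mu> / s) / s ^ (2 * n + 1) * (s ^ (n + 1) * exp (\<mu> / s\<^sup>2 * s)) = 1 / s ^ n"
    using s by (simp add: power2_eq_square exp_minus power_add mult_2_right field_simps)
  ultimately show ?thesis by simp
qed

lemma has_bochner_integral_ncx2_mean:
  assumes "0 < s" and "0 \<le> \<mu>"
  shows "has_bochner_integral lborel (\<lambda>x. x * ncx2_density s \<mu> x) (s + \<mu>)"
proof -
  have "x * ncx2_density s \<mu> x = s\<^sup>2 * ncx2_kernel 1 s \<mu> x + \<mu> * s\<^sup>2 * ncx2_kernel 2 s \<mu> x" for x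
    using assms unfolding ncx2_kernel_def bessel_red_0_eq[of "\<mu> / s\<^sup>2 * x"]
    by (simp add: field_simps power2_eq_square)
  moreover have "has_bochner_integral lborel (\<lambda>x. s\<^sup>2 * ncx2_kernel 1 s \<mu> x + \<mu> * s\<^sup>2 * ncx2_kernel 2 s \<mu> x)
      (s\<^sup>2 * (1 / s ^ 1) + \<mu> * s\<^sup>2 * (1 / s ^ 2))"
    using assms by (intro has_bochner_integral_add has_bochner_integral_mult_right has_bochner_integral_ncx2_kernel)
  ultimately show ?thesis using assms by (simp add: power2_eq_square)
qed

text \<open>The logarithmic derivative of \<open>bessel_red 0 (\<mu>x/s\<^sup>2)\<close> in \<open>\<mu>\<close>.\<close>
definition ncx2_ratio :: "real \<Rightarrow> real \<Rightarrow> real \<Rightarrow> real" where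
  "ncx2_ratio s \<mu> x = x / s\<^sup>2 * bessel_red 1 (\<mu> / s\<^sup>2 * x) / bessel_red 0 (\<mu> / s\<^sup>2 * x)"

definition ncx2_score :: "real \<Rightarrow> real \<Rightarrow> real \<Rightarrow> real" where
  "ncx2_score s \<mu> x = ncx2_ratio s \<mu> x - 1 / s"

definition ncx2_score_deriv :: "real \<Rightarrow> real \<Rightarrow> real \<Rightarrow> real" where
  "ncx2_score_deriv s \<mu> x = (x / s\<^sup>2)\<^sup>2 *
     (bessel_red 2 (\<mu> / s\<^sup>2 * x) / bessel_red 0 (\<mu> / s\<^sup>2 * x) - (bessel_red 1 (\<mu> / s\<^sup>2 * x) / bessel_red 0 (\<mu> / s\<^sup>2 * x))\<^sup>2)"

definition ncx2_fisher :: "real \<Rightarrow> real \<Rightarrow> real" where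
  "ncx2_fisher s \<mu> = (LINT x|lborel. (ncx2_score s \<mu> x)\<^sup>2 * ncx2_density s \<mu> x)"

lemma has_real_derivative_ln_ncx2_density:
  assumes s: "0 < s" and x: "0 \<le> x" and \<mu>: "\<And>t. 0 \<le> \<mu> t"
    and \<mu>': "\<And>t. (\<mu> has_real_derivative \<mu>' t) (at t)"
  shows "((\<lambda>t. ln (ncx2_density s (\<mu> t) x)) has_real_derivative \<mu>' t * ncx2_score s (\<mu> t) x) (at t)"
proof -
  have "ln (ncx2_density s (\<mu> t) x) = - ln s - (x + \<mu> t) / s + ln (bessel_red 0 (\<mu> t / s\<^sup>2 * x))" for t
    using s x \<mu>[of t] bessel_red_pos[of "\<mu> t / s\<^sup>2 * x" 0]
    by (simp add: ncx2_kernel_def ln_mult ln_div field_simps)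
  moreover have "((\<lambda>t. - ln s - (x + \<mu> t) / s + ln (bessel_red 0 (\<mu> t / s\<^sup>2 * x)))
      has_real_derivative \<mu>' t * ncx2_score s (\<mu> t) x) (at t)"
    using s x \<mu>[of t] bessel_red_pos[of "\<mu> t / s\<^sup>2 * x" 0]
    by (auto intro!: derivative_eq_intros \<mu>' simp: ncx2_score_def ncx2_ratio_def field_simps power2_eq_square)
  ultimately show ?thesis by simp
qed

lemma has_real_derivative_ncx2_score:
  assumes s: "0 < s" and "0 \<le> x" and "0 \<le> \<mu> t" and \<mu>': "(\<mu> has_real_derivative \<mu>' t) (at t)"
  shows "((\<lambda>t. ncx2_score s (\<mu> t) x) has_real_derivative \<mu>' t * ncx2_score_deriv s (\<mu> t) x) (at t)"
  using assms bessel_red_pos[of "\<mu> t / s\<^sup>2 * x" 0] unfolding ncx2_score_def ncx2_ratio_def ncx2_score_deriv_def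
  by (auto intro!: derivative_eq_intros \<mu>' simp: field_simps power2_eq_square numeral_2_eq_2)

lemma ncx2_ratio_times_density:
  assumes "0 < s" and "0 \<le> \<mu>"
  shows "ncx2_ratio s \<mu> x * ncx2_density s \<mu> x = ncx2_kernel 1 s \<mu> x"
  using assms bessel_red_pos[of "\<mu> / s\<^sup>2 * x" 0]
  by (auto simp: ncx2_ratio_def ncx2_kernel_def mult_ac)

lemma ncx2_score_deriv_times_density:
  assumes "0 < s" and "0 \<le> \<mu>"
  shows "ncx2_score_deriv s \<mu> x * ncx2_density s \<mu> x
    = ncx2_kernel 2 s \<mu> x - (ncx2_ratio s \<mu> x)\<^sup>2 * ncx2_density s \<mu> x"
  using assms bessel_red_pos[of "\<mu> / s\<^sup>2 * x" 0]
  by (auto simp: ncx2_score_deriv_def ncx2_ratio_def ncx2_kernel_def field_simps power2_eq_square)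

lemma integrable_ncx2_ratio_sq:
  assumes s: "0 < s" and \<mu>: "0 \<le> \<mu>"
  shows "integrable lborel (\<lambda>x. (ncx2_ratio s \<mu> x)\<^sup>2 * ncx2_density s \<mu> x)"
proof (rule Bochner_Integration.integrable_bound)
  let ?b = "\<lambda>x. exp (- \<mu> / s) / s ^ 5 * (if 0 \<le> x then x ^ 2 * exp (- x / s) * bessel_red 1 (\<mu> / s\<^sup>2 * x) else 0)"
  show "integrable lborel ?b"
    using assms by (intro integrable_mult_right integrable_laplace_bessel_red) auto
  show "AE x in lborel. norm ((ncx2_ratio s \<mu> x)\<^sup>2 * ncx2_density s \<mu> x) \<le> norm (?b x)"
  proof (intro AE_I2)
    fix x
    show "norm ((ncx2_ratio s \<mu> x)\<^sup>2 * ncx2_density s \<mu> x) \<le> norm (?b x)"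
    proof (cases "0 \<le> x")
      case True
      define y where "y = \<mu> / s\<^sup>2 * x"
      have y: "0 \<le> y" using s \<mu> True by (simp add: y_def)
      have J0: "0 < bessel_red 0 y" using bessel_red_pos[OF y] .
      have "(bessel_red 1 y)\<^sup>2 / bessel_red 0 y \<le> bessel_red 1 y"
        using J0 bessel_red_pos[OF y, of 1] bessel_red_Suc_le[OF y, of 0]
        by (simp add: power2_eq_square divide_simps mult_left_mono)
      then have "exp (- \<mu> / s) / s ^ 5 * (x\<^sup>2 * exp (- x / s) * ((bessel_red 1 y)\<^sup>2 / bessel_red 0 y))
          \<le> exp (- \<mu> / s) / s ^ 5 * (x\<^sup>2 * exp (- x / s) * bessel_red 1 y)"
        using s by (intro mult_left_mono) auto
      also have "\<dots> = ?b x"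
        using True by (simp add: y_def)
      finally have le: "exp (- \<mu> / s) / s ^ 5 * (x\<^sup>2 * exp (- x / s) * ((bessel_red 1 y)\<^sup>2 / bessel_red 0 y))
          \<le> ?b x" .
      have "exp (- (x + \<mu>) / s) = exp (- \<mu> / s) * exp (- x / s)"
        by (simp add: exp_add[symmetric] diff_divide_distrib)
      then have eq: "(ncx2_ratio s \<mu> x)\<^sup>2 * ncx2_density s \<mu> x
          = exp (- \<mu> / s) / s ^ 5 * (x\<^sup>2 * exp (- x / s) * ((bessel_red 1 y)\<^sup>2 / bessel_red 0 y))"
        unfolding ncx2_ratio_def ncx2_kernel_def y_def[symmetric]
        using True s J0 by (simp add: power2_eq_square eval_nat_numeral field_simps)
      have nonneg: "0 \<le> (ncx2_ratio s \<mu> x)\<^sup>2 * ncx2_density s \<mu> x"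
        using True s \<mu> by (simp add: less_imp_le[OF ncx2_density_pos])
      show ?thesis
        unfolding real_norm_def eq abs_of_nonneg[OF nonneg[unfolded eq]] using le abs_ge_self[of "?b x"] by linarith
    qed (simp add: ncx2_kernel_def)
  qed
qed (simp add: ncx2_ratio_def ncx2_kernel_def)

lemma has_bochner_integral_ncx2_ratio_sq:
  "0 < s \<Longrightarrow> 0 \<le> \<mu> \<Longrightarrow> has_bochner_integral lborel (\<lambda>x. (ncx2_ratio s \<mu> x)\<^sup>2 * ncx2_density s \<mu> x)
     (LINT x|lborel. (ncx2_ratio s \<mu> x)\<^sup>2 * ncx2_density s \<mu> x)"
  by (intro has_bochner_integral_integrable integrable_ncx2_ratio_sq)

lemma has_bochner_integral_ncx2_score:
  assumes "0 < s" and "0 \<le> \<mu>"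
  shows "has_bochner_integral lborel (\<lambda>x. ncx2_score s \<mu> x * ncx2_density s \<mu> x) 0"
proof -
  have "has_bochner_integral lborel (\<lambda>x. ncx2_kernel 1 s \<mu> x - 1 / s * ncx2_density s \<mu> x) (1 / s ^ 1 - 1 / s * (1 / s ^ 0))"
    using assms by (intro has_bochner_integral_diff has_bochner_integral_mult_right has_bochner_integral_ncx2_kernel)
  then show ?thesis
    using assms by (simp add: ncx2_score_def left_diff_distrib ncx2_ratio_times_density)
qed

lemma ncx2_fisher_eq:
  assumes "0 < s" and "0 \<le> \<mu>"
  shows "ncx2_fisher s \<mu> = (LINT x|lborel. (ncx2_ratio s \<mu> x)\<^sup>2 * ncx2_density s \<mu> x) - 1 / s\<^sup>2"
proof -
  let ?R = "LINT x|lborel. (ncx2_ratio s \<mu> x)\<^sup>2 * ncx2_density s \<mu> x"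
  have "(ncx2_score s \<mu> x)\<^sup>2 * ncx2_density s \<mu> x
      = (ncx2_ratio s \<mu> x)\<^sup>2 * ncx2_density s \<mu> x - 2 / s * ncx2_kernel 1 s \<mu> x + 1 / s\<^sup>2 * ncx2_density s \<mu> x" for x
    unfolding ncx2_ratio_times_density[OF assms, symmetric] ncx2_score_def
    using assms by (simp add: power2_diff power2_eq_square field_simps)
  moreover have "has_bochner_integral lborel (\<lambda>x. (ncx2_ratio s \<mu> x)\<^sup>2 * ncx2_density s \<mu> x
      - 2 / s * ncx2_kernel 1 s \<mu> x + 1 / s\<^sup>2 * ncx2_density s \<mu> x) (?R - 2 / s * (1 / s ^ 1) + 1 / s\<^sup>2 * (1 / s ^ 0))"
    using assms by (intro has_bochner_integral_add has_bochner_integral_diff has_bochner_integral_mult_right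
        has_bochner_integral_ncx2_kernel has_bochner_integral_ncx2_ratio_sq)
  ultimately show ?thesis
    unfolding ncx2_fisher_def by (simp add: has_bochner_integral_integral_eq power2_eq_square)
qed

text \<open>The information identity \<open>E[\<partial>score/\<partial>\<mu>] = - E[score\<^sup>2]\<close>, obtained without differentiating
  under the integral sign: both sides are explicit moments plus the same integral of
  \<open>ncx2_ratio\<^sup>2\<close> against the density.\<close>
lemma has_bochner_integral_ncx2_score_deriv:
  assumes "0 < s" and "0 \<le> \<mu>"
  shows "has_bochner_integral lborel (\<lambda>x. ncx2_score_deriv s \<mu> x * ncx2_density s \<mu> x) (- ncx2_fisher s \<mu>)"
proof -
  have "has_bochner_integral lborel (\<lambda>x. ncx2_kernel 2 s \<mu> x - (ncx2_ratio s \<mu> x)\<^sup>2 * ncx2_density s \<mu> x)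
      (1 / s ^ 2 - (LINT x|lborel. (ncx2_ratio s \<mu> x)\<^sup>2 * ncx2_density s \<mu> x))"
    using assms by (intro has_bochner_integral_diff has_bochner_integral_ncx2_kernel has_bochner_integral_ncx2_ratio_sq)
  then show ?thesis
    using assms by (simp add: ncx2_score_deriv_times_density ncx2_fisher_eq)
qed

lemma has_bochner_integral_ncx2_neg_ln_deriv2:
  assumes "0 < s" and "0 \<le> \<mu>"
  shows "has_bochner_integral lborel
    (\<lambda>x. - (a * ncx2_score s \<mu> x + b\<^sup>2 * ncx2_score_deriv s \<mu> x) * ncx2_density s \<mu> x) (b\<^sup>2 * ncx2_fisher s \<mu>)"
proof -
  have "has_bochner_integral lborel
      (\<lambda>x. - (a * (ncx2_score s \<mu> x * ncx2_density s \<mu> x) + b\<^sup>2 * (ncx2_score_deriv s \<mu> x * ncx2_density s \<mu> x)))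
      (- (a * 0 + b\<^sup>2 * - ncx2_fisher s \<mu>))"
    using assms by (intro has_bochner_integral_minus has_bochner_integral_add has_bochner_integral_mult_right
        has_bochner_integral_ncx2_score has_bochner_integral_ncx2_score_deriv)
  then show ?thesis by (simp add: algebra_simps)
qed

lemma gfun_integrand_rescaled:
  assumes s: "0 < s" and \<mu>: "0 < \<mu>"
  defines "\<gamma> \<equiv> \<mu> / s"
  shows "indicator {0<..} (x / \<mu>) * (\<gamma> * (x / \<mu>) * exp (- \<gamma> * (1 + x / \<mu>)) * bessel_I 0 (2 * \<gamma> * sqrt (x / \<mu>))
           * (1 - (bessel_R (2 * \<gamma> * sqrt (x / \<mu>)))\<^sup>2))
       = x * ncx2_density s \<mu> x - \<mu> * s\<^sup>2 * ((ncx2_ratio s \<mu> x)\<^sup>2 * ncx2_density s \<mu> x)"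
proof (cases "0 < x")
  case True
  define y where "y = \<mu> / s\<^sup>2 * x"
  have y: "(2 * \<gamma> * sqrt (x / \<mu>) / 2)\<^sup>2 = y"
    using True \<mu> s by (simp add: \<gamma>_def y_def power_mult_distrib power_divide) (simp add: power2_eq_square)
  have J0: "0 < bessel_red 0 y" using True \<mu> s by (intro bessel_red_pos) (simp add: y_def)
  have I0: "bessel_I 0 (2 * \<gamma> * sqrt (x / \<mu>)) = bessel_red 0 y"
    unfolding bessel_I_eq_bessel_red y by simp
  have R: "(bessel_R (2 * \<gamma> * sqrt (x / \<mu>)))\<^sup>2 = y * (bessel_red 1 y)\<^sup>2 / (bessel_red 0 y)\<^sup>2"
    unfolding bessel_R_def bessel_I_eq_bessel_red y
    by (simp add: power_divide power_mult_distrib y[symmetric])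
  have scale: "\<gamma> * (x / \<mu>) = x / s" and exponent: "- \<gamma> * (1 + x / \<mu>) = - (x + \<mu>) / s"
    using \<mu> s by (simp_all add: \<gamma>_def field_simps)
  show ?thesis
    unfolding I0 R scale exponent ncx2_ratio_def ncx2_kernel_def y_def[symmetric]
    using True \<mu> s J0 by (simp add: y_def field_simps power2_eq_square)
next
  case False
  then show ?thesis using \<mu> by (cases "x = 0") (auto simp: ncx2_kernel_def ncx2_ratio_def zero_less_divide_iff)
qed

lemma ncx2_fisher_eq_gfun:
  assumes s: "0 < s" and \<mu>: "0 < \<mu>"
  shows "ncx2_fisher s \<mu> = (1 / (\<mu> / s) - gfun (\<mu> / s)) / s\<^sup>2"
proof -
  let ?R = "LINT x|lborel. (ncx2_ratio s \<mu> x)\<^sup>2 * ncx2_density s \<mu> x"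
  let ?g = "\<lambda>t. \<mu> / s * t * exp (- (\<mu> / s) * (1 + t)) * bessel_I 0 (2 * (\<mu> / s) * sqrt t)
              * (1 - (bessel_R (2 * (\<mu> / s) * sqrt t))\<^sup>2)"
  have "gfun (\<mu> / s) = (LINT t|lborel. indicator {0<..} t * ?g t)"
    unfolding gfun_def set_lebesgue_integral_def by simp
  also have "\<dots> = 1 / \<mu> * (LINT x|lborel. indicator {0<..} (x / \<mu>) * ?g (x / \<mu>))"
    using lborel_integral_real_affine[of "1 / \<mu>" "\<lambda>t. indicator {0<..} t * ?g t" 0] \<mu> by simp
  also have "(LINT x|lborel. indicator {0<..} (x / \<mu>) * ?g (x / \<mu>)) = s + \<mu> - \<mu> * s\<^sup>2 * ?R"
    unfolding gfun_integrand_rescaled[OF s \<mu>]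
    using s \<mu> by (intro has_bochner_integral_integral_eq has_bochner_integral_diff has_bochner_integral_mult_right
        has_bochner_integral_ncx2_mean has_bochner_integral_ncx2_ratio_sq) auto
  finally have "gfun (\<mu> / s) = 1 / \<mu> * (s + \<mu> - \<mu> * s\<^sup>2 * ?R)" .
  then show ?thesis
    using s \<mu> by (simp add: ncx2_fisher_eq diff_divide_distrib add_divide_distrib)
qed

lemma integral_PiM_sum_times_prod:
  fixes M :: "'a measure" and h p :: "'i \<Rightarrow> 'a \<Rightarrow> real"
  assumes "sigma_finite_measure M" and I: "finite I"
    and hp: "\<And>i. i \<in> I \<Longrightarrow> integrable M (\<lambda>x. h i x * p i x)"
    and p: "\<And>i. i \<in> I \<Longrightarrow> has_bochner_integral M (p i) 1"
  shows "(\<integral>x. (\<Sum>i\<in>I. h i (x i)) * (\<Prod>j\<in>I. p j (x j)) \<partial>PiM I (\<lambda>_. M)) = (\<Sum>i\<in>I. \<integral>x. h i x * p i x \<partial>M)"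
proof -
  interpret product_sigma_finite "\<lambda>_. M"
    using assms(1) by (simp add: product_sigma_finite_def)
  define G where "G i j y = (if j = i then h i y * p i y else p j y)" for i j y
  have G_integrable: "integrable M (G i j)" if "i \<in> I" "j \<in> I" for i j
    using that hp p by (cases "j = i") (auto simp: G_def[abs_def] intro: integrable.intros)
  have "(\<Sum>i\<in>I. h i (x i)) * (\<Prod>j\<in>I. p j (x j)) = (\<Sum>i\<in>I. \<Prod>j\<in>I. G i j (x j))" for x
  proof -
    have "(\<Prod>j\<in>I. G i j (x j)) = h i (x i) * (\<Prod>j\<in>I. p j (x j))" if "i \<in> I" for i
    proof -
      have "(\<Prod>j\<in>I. G i j (x j)) = (\<Prod>j\<in>I. (if j = i then h i (x i) else 1) * p j (x j))"
        by (intro prod.cong) (auto simp: G_def)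
      also have "\<dots> = h i (x i) * (\<Prod>j\<in>I. p j (x j))"
        using that I by (simp add: prod.distrib)
      finally show ?thesis .
    qed
    then show ?thesis by (simp add: sum_distrib_right)
  qed
  then have "(\<integral>x. (\<Sum>i\<in>I. h i (x i)) * (\<Prod>j\<in>I. p j (x j)) \<partial>PiM I (\<lambda>_. M))
      = (\<Sum>i\<in>I. \<integral>x. (\<Prod>j\<in>I. G i j (x j)) \<partial>PiM I (\<lambda>_. M))"
    using I G_integrable by (simp add: Bochner_Integration.integral_sum product_integrable_prod)
  also have "\<dots> = (\<Sum>i\<in>I. \<Prod>j\<in>I. integral\<^sup>L M (G i j))"
    using I G_integrable by (intro sum.cong refl product_integral_prod) auto
  also have "\<dots> = (\<Sum>i\<in>I. \<integral>x. h i x * p i x \<partial>M)"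
  proof (intro sum.cong refl)
    fix i assume "i \<in> I"
    then have "(\<Prod>j\<in>I. integral\<^sup>L M (G i j)) = (\<Prod>j\<in>I. if j = i then \<integral>x. h i x * p i x \<partial>M else 1)"
      using p by (intro prod.cong) (auto simp: G_def[abs_def] has_bochner_integral_integral_eq)
    then show "(\<Prod>j\<in>I. integral\<^sup>L M (G i j)) = (\<integral>x. h i x * p i x \<partial>M)"
      using I \<open>i \<in> I\<close> by simp
  qed
  finally show ?thesis .
qed

lemma deriv2_ln_prod_ncx2_density:
  assumes s: "0 < s" and I: "finite I" and x: "\<And>i. i \<in> I \<Longrightarrow> 0 \<le> x i"
    and \<mu>: "\<And>i t. 0 \<le> \<mu> i t"
    and \<mu>': "\<And>i t. (\<mu> i has_real_derivative \<mu>' i t) (at t)"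
    and \<mu>'': "\<And>i t. (\<mu>' i has_real_derivative \<mu>'' i t) (at t)"
  shows "deriv (deriv (\<lambda>t. ln (\<Prod>i\<in>I. ncx2_density s (\<mu> i t) (x i)))) t
       = (\<Sum>i\<in>I. \<mu>'' i t * ncx2_score s (\<mu> i t) (x i) + (\<mu>' i t)\<^sup>2 * ncx2_score_deriv s (\<mu> i t) (x i))"
proof -
  have "ln (\<Prod>i\<in>I. ncx2_density s (\<mu> i t) (x i)) = (\<Sum>i\<in>I. ln (ncx2_density s (\<mu> i t) (x i)))" for t
    using s I x \<mu> ncx2_density_pos by (intro ln_prod) (auto simp: less_imp_neq[symmetric])
  moreover have "((\<lambda>t. \<Sum>i\<in>I. ln (ncx2_density s (\<mu> i t) (x i)))
      has_real_derivative (\<Sum>i\<in>I. \<mu>' i t * ncx2_score s (\<mu> i t) (x i))) (at t)" for t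
    using s x \<mu> \<mu>' by (intro DERIV_sum has_real_derivative_ln_ncx2_density) auto
  ultimately have "deriv (\<lambda>t. ln (\<Prod>i\<in>I. ncx2_density s (\<mu> i t) (x i)))
      = (\<lambda>t. \<Sum>i\<in>I. \<mu>' i t * ncx2_score s (\<mu> i t) (x i))"
    by (intro ext DERIV_imp_deriv) simp
  moreover have "((\<lambda>t. \<Sum>i\<in>I. \<mu>' i t * ncx2_score s (\<mu> i t) (x i)) has_real_derivative
      (\<Sum>i\<in>I. \<mu>'' i t * ncx2_score s (\<mu> i t) (x i) + (\<mu>' i t)\<^sup>2 * ncx2_score_deriv s (\<mu> i t) (x i))) (at t)"
    using s x \<mu> \<mu>'' by (intro DERIV_sum DERIV_cong[OF DERIV_mult[OF _ has_real_derivative_ncx2_score[OF _ _ _ \<mu>']]])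
      (auto simp: power2_eq_square)
  ultimately show ?thesis by (simp add: DERIV_imp_deriv)
qed

lemma neg_deriv2_ln_prod_ncx2_density_mult:
  assumes s: "0 < s" and I: "finite I"
    and \<mu>: "\<And>i t. 0 \<le> \<mu> i t"
    and \<mu>': "\<And>i t. (\<mu> i has_real_derivative \<mu>' i t) (at t)"
    and \<mu>'': "\<And>i t. (\<mu>' i has_real_derivative \<mu>'' i t) (at t)"
  shows "- deriv (deriv (\<lambda>t. ln (\<Prod>i\<in>I. ncx2_density s (\<mu> i t) (x i)))) t * (\<Prod>i\<in>I. ncx2_density s (\<mu> i t) (x i))
       = (\<Sum>i\<in>I. - (\<mu>'' i t * ncx2_score s (\<mu> i t) (x i) + (\<mu>' i t)\<^sup>2 * ncx2_score_deriv s (\<mu> i t) (x i)))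
         * (\<Prod>i\<in>I. ncx2_density s (\<mu> i t) (x i))"
proof (cases "\<forall>i\<in>I. 0 \<le> x i")
  case True
  then show ?thesis
    using deriv2_ln_prod_ncx2_density[where \<mu> = \<mu> and \<mu>' = \<mu>' and \<mu>'' = \<mu>'' and x = x, OF s I _ \<mu> \<mu>' \<mu>'']
    by (simp add: sum_subtractf sum_negf sum.distrib)
next
  case False
  then have "(\<Prod>i\<in>I. ncx2_density s (\<mu> i t) (x i)) = 0"
    using I by (auto simp: ncx2_kernel_def)
  then show ?thesis by simp
qed

lemma sum_sq_cos_eq:
  fixes \<alpha> \<beta> \<theta> :: real
  shows "\<alpha>\<^sup>2 + \<beta>\<^sup>2 + 2 * \<alpha> * \<beta> * cos \<theta> = (\<alpha> + \<beta> * cos \<theta>)\<^sup>2 + (\<beta> * sin \<theta>)\<^sup>2"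
  using sin_cos_squared_add[of \<theta>] by (simp add: power2_eq_square algebra_simps)
    (simp add: distrib_left[symmetric])

lemma ncp_nonneg: "0 \<le> A \<Longrightarrow> 0 \<le> ncp A \<alpha> \<beta> L \<theta> l"
  unfolding ncp_def sum_sq_cos_eq by simp

lemma sin_eq_0_if_ncp_eq_0:
  assumes "0 < A" and "\<beta> \<noteq> 0" and "ncp A \<alpha> \<beta> L \<theta> l = 0"
  shows "sin (psi L l + \<theta>) = 0"
  using assms unfolding ncp_def sum_sq_cos_eq by (simp add: add_nonneg_eq_0_iff)

lemma has_real_derivative_ncp:
  "((\<lambda>t. ncp A \<alpha> \<beta> L t l) has_real_derivative - 2 * A * \<alpha> * \<beta> * sin (psi L l + t)) (at t)"
  unfolding ncp_def by (auto intro!: derivative_eq_intros simp: algebra_simps)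

lemma obs_density_eq_ncx2_density:
  assumes A: "0 < A"
  shows "obs_density A \<alpha> \<beta> \<sigma>2 L \<theta> l x = ncx2_density (A * \<sigma>2) (ncp A \<alpha> \<beta> L \<theta> l) x"
proof (cases "0 \<le> x")
  case True
  let ?\<mu> = "ncp A \<alpha> \<beta> L \<theta> l"
  have "(sqrt (?\<mu> * x) / (A * \<sigma>2 / 2) / 2)\<^sup>2 = ?\<mu> / (A * \<sigma>2)\<^sup>2 * x"
    using True ncp_nonneg[of A] A by (simp add: power_divide)
  then have "bessel_I 0 (sqrt (?\<mu> * x) / (A * \<sigma>2 / 2)) = bessel_red 0 (?\<mu> / (A * \<sigma>2)\<^sup>2 * x)"
    unfolding bessel_I_eq_bessel_red by simp
  then show ?thesis
    using True unfolding obs_density_def ncx2_kernel_def by simp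
qed (simp add: obs_density_def ncx2_kernel_def)

lemma sum_cos_psi: "2 \<le> L \<Longrightarrow> (\<Sum>l<L. cos (psi L l + \<phi>)) = 0"
proof -
  assume L: "2 \<le> L"
  have "(\<Sum>l<L. cis (2 * pi * real l / real L)) = \<Sum>{z::complex. z ^ L = 1}"
    using L Complex.bij_betw_roots_unity[of L] by (intro sum.reindex_bij_betw) auto
  also have "\<dots> = 0"
    using L by (intro sum_roots_unity) auto
  finally have "(\<Sum>l<L. cis (2 * pi * real l / real L)) * cis \<phi> = 0"
    by simp
  then have "(\<Sum>l<L. cis (psi L l + \<phi>)) = 0"
    unfolding sum_distrib_right cis_mult psi_def .
  then have "Re (\<Sum>l<L. cis (psi L l + \<phi>)) = 0"
    by simp
  then show ?thesis
    by (simp add: Re_sum)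
qed

lemma fisher_info_eq_sum_ncx2_fisher:
  assumes A: "0 < A" and \<sigma>2: "0 < \<sigma>2"
  shows "fisher_info A \<alpha> \<beta> \<sigma>2 L \<phi>
    = (\<Sum>l<L. (2 * A * \<alpha> * \<beta> * sin (psi L l + \<phi>))\<^sup>2 * ncx2_fisher (A * \<sigma>2) (ncp A \<alpha> \<beta> L \<phi> l))"
proof -
  define s where "s = A * \<sigma>2"
  define \<mu> where "\<mu> l t = ncp A \<alpha> \<beta> L t l" for l t
  define \<mu>' where "\<mu>' l t = - 2 * A * \<alpha> * \<beta> * sin (psi L l + t)" for l t
  define \<mu>'' where "\<mu>'' l t = - 2 * A * \<alpha> * \<beta> * cos (psi L l + t)" for l t
  define h where "h l y = - (\<mu>'' l \<phi> * ncx2_score s (\<mu> l \<phi>) y + (\<mu>' l \<phi>)\<^sup>2 * ncx2_score_deriv s (\<mu> l \<phi>) y)"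
    for l y
  have s: "0 < s" using A \<sigma>2 by (simp add: s_def)
  have \<mu>_nonneg: "0 \<le> \<mu> l t" for l t
    using A by (simp add: \<mu>_def ncp_nonneg)
  have \<mu>': "(\<mu> l has_real_derivative \<mu>' l t) (at t)" for l t
    unfolding \<mu>_def \<mu>'_def by (rule has_real_derivative_ncp)
  have \<mu>'': "(\<mu>' l has_real_derivative \<mu>'' l t) (at t)" for l t
    unfolding \<mu>'_def \<mu>''_def by (auto intro!: derivative_eq_intros)
  have joint: "joint_density A \<alpha> \<beta> \<sigma>2 L \<theta> x = (\<Prod>l<L. ncx2_density s (\<mu> l \<theta>) (x l))" for \<theta> x
    using A by (simp add: joint_density_def obs_density_eq_ncx2_density s_def \<mu>_def)
  have integrand: "- deriv (deriv (\<lambda>\<theta>. ln (joint_density A \<alpha> \<beta> \<sigma>2 L \<theta> x))) \<phi> * joint_density A \<alpha> \<beta> \<sigma>2 L \<phi> x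
      = (\<Sum>l<L. h l (x l)) * (\<Prod>l<L. ncx2_density s (\<mu> l \<phi>) (x l))" for x
    unfolding joint h_def by (rule neg_deriv2_ln_prod_ncx2_density_mult[OF s finite_lessThan \<mu>_nonneg \<mu>' \<mu>''])
  have h_integral: "has_bochner_integral lborel (\<lambda>y. h l y * ncx2_density s (\<mu> l \<phi>) y)
      ((\<mu>' l \<phi>)\<^sup>2 * ncx2_fisher s (\<mu> l \<phi>))" for l
    unfolding h_def using s \<mu>_nonneg by (rule has_bochner_integral_ncx2_neg_ln_deriv2)
  have density_integral: "has_bochner_integral lborel (ncx2_density s (\<mu> l \<phi>)) 1" for l
    using has_bochner_integral_ncx2_kernel[OF s \<mu>_nonneg, of 0] by simp
  have "fisher_info A \<alpha> \<beta> \<sigma>2 L \<phi> = (\<Sum>l<L. LINT y|lborel. h l y * ncx2_density s (\<mu> l \<phi>) y)"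
    unfolding fisher_info_def integrand
    by (intro integral_PiM_sum_times_prod sigma_finite_lborel finite_lessThan density_integral
        integrable.intros[OF h_integral])
  also have "\<dots> = (\<Sum>l<L. (\<mu>' l \<phi>)\<^sup>2 * ncx2_fisher s (\<mu> l \<phi>))"
    by (intro sum.cong refl has_bochner_integral_integral_eq h_integral)
  finally show ?thesis
    by (simp add: \<mu>'_def \<mu>_def s_def power_mult_distrib)
qed

lemma mean_snr_eq:
  assumes "2 \<le> L"
  shows "(\<Sum>l<L. snr \<alpha> \<beta> \<sigma>2 L \<phi> l) / real L = (\<alpha>\<^sup>2 + \<beta>\<^sup>2) / \<sigma>2"
proof -
  have "(\<Sum>l<L. snr \<alpha> \<beta> \<sigma>2 L \<phi> l)
      = real L * ((\<alpha>\<^sup>2 + \<beta>\<^sup>2) / \<sigma>2) + 2 * \<alpha> * \<beta> / \<sigma>2 * (\<Sum>l<L. cos (psi L l + \<phi>))"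
    by (simp add: snr_def add_divide_distrib sum.distrib sum_distrib_left)
  then show ?thesis
    using assms by (simp add: sum_cos_psi)
qed

lemma fisher_term_eq_gfun_snr:
  assumes A: "0 < A" and \<beta>: "\<beta> \<noteq> 0" and \<sigma>2: "0 < \<sigma>2"
  shows "(2 * A * \<alpha> * \<beta> * sin (psi L l + \<phi>))\<^sup>2 * ncx2_fisher (A * \<sigma>2) (ncp A \<alpha> \<beta> L \<phi> l)
    = (2 * \<alpha> * \<beta> / \<sigma>2)\<^sup>2 * ((sin (psi L l + \<phi>))\<^sup>2
        * (1 / snr \<alpha> \<beta> \<sigma>2 L \<phi> l - gfun (snr \<alpha> \<beta> \<sigma>2 L \<phi> l)))"
proof (cases "ncp A \<alpha> \<beta> L \<phi> l = 0")
  case True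
  then have "sin (psi L l + \<phi>) = 0" using A \<beta> by (intro sin_eq_0_if_ncp_eq_0)
  then show ?thesis by simp
next
  case False
  then have "0 < ncp A \<alpha> \<beta> L \<phi> l" using A ncp_nonneg[of A \<alpha> \<beta> L \<phi> l] by simp
  moreover have "snr \<alpha> \<beta> \<sigma>2 L \<phi> l = ncp A \<alpha> \<beta> L \<phi> l / (A * \<sigma>2)"
    using A by (simp add: snr_def ncp_def)
  ultimately show ?thesis
    using A \<sigma>2 by (simp add: ncx2_fisher_eq_gfun power_mult_distrib power_divide)
qed

theorem theorem1:
  fixes L :: nat and A \<alpha> \<beta> \<sigma>2 \<phi> :: real
  assumes "L \<ge> 2" and "A > 0" and "\<alpha> > 0" and "\<beta> > 0" and "\<sigma>2 > 0"
    and "0 \<le> \<phi>" and "\<phi> < 2 * pi"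
  shows "1 / CRLB A \<alpha> \<beta> \<sigma>2 L \<phi> =
    (let K = 2 * \<alpha> * \<beta> / (\<alpha>\<^sup>2 + \<beta>\<^sup>2);
         \<gamma>bar = (\<Sum>l<L. snr \<alpha> \<beta> \<sigma>2 L \<phi> l) / real L
     in K\<^sup>2 * \<gamma>bar\<^sup>2 * (\<Sum>l<L. (sin (psi L l + \<phi>))\<^sup>2
           * (1 / snr \<alpha> \<beta> \<sigma>2 L \<phi> l - gfun (snr \<alpha> \<beta> \<sigma>2 L \<phi> l))))"
proof -
  note L = assms(1) and A = assms(2) and \<alpha> = assms(3) and \<beta> = assms(4) and \<sigma>2 = assms(5)
  have K: "(2 * \<alpha> * \<beta> / (\<alpha>\<^sup>2 + \<beta>\<^sup>2))\<^sup>2 * ((\<alpha>\<^sup>2 + \<beta>\<^sup>2) / \<sigma>2)\<^sup>2 = (2 * \<alpha> * \<beta> / \<sigma>2)\<^sup>2"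
    using \<alpha> by (simp add: power_divide field_simps)
  have "1 / CRLB A \<alpha> \<beta> \<sigma>2 L \<phi>
      = (\<Sum>l<L. (2 * A * \<alpha> * \<beta> * sin (psi L l + \<phi>))\<^sup>2 * ncx2_fisher (A * \<sigma>2) (ncp A \<alpha> \<beta> L \<phi> l))"
    using A \<sigma>2 by (simp add: CRLB_def fisher_info_eq_sum_ncx2_fisher)
  also have "\<dots> = (2 * \<alpha> * \<beta> / \<sigma>2)\<^sup>2 * (\<Sum>l<L. (sin (psi L l + \<phi>))\<^sup>2
      * (1 / snr \<alpha> \<beta> \<sigma>2 L \<phi> l - gfun (snr \<alpha> \<beta> \<sigma>2 L \<phi> l)))"
    using A \<beta> \<sigma>2 by (simp add: fisher_term_eq_gfun_snr sum_distrib_left)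
  finally show ?thesis
    unfolding Let_def mean_snr_eq[OF L] K .
qed

end
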